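(* Let $\mathcal D_1=(L_1,\|\cdot\|_1)$ and $\mathcal D_2=(L_2,\|\cdot\|_2)$ be arithmetic divisors on $\overline{\operatorname{Spec}\mathbf{Z}}$ that are non-degenerate, i.e. whose semi-norms are not identically zero. For $\mathcal D=(L,\|\cdot\|)$ let $S(\mathcal D)=\{\|x\|\mid x\in L\}\subset[0,\infty)$. Then $\mathcal D_1$ and $\mathcal D_2$ are isomorphic if and only if $S(\mathcal D_1)=S(\mathcal D_2)$.
   Context: An arithmetic divisor on $\overline{\operatorname{Spec}\mathbf{Z}}$ is a pair $(L,\|\cdot\|)$ with $L$ torsion-free abelian of rank 1 and $\|\cdot\|$ a semi-norm on $L\otimes_\mathbf{Z}\mathbf{R}$ of the form $\lambda|\phi(\cdot)|$ with $\phi:L\otimes\mathbf{R}\to\mathbf{R}$ an isomorphism and $\lambda\ge0$. An isomorphism $(L_1,\|\cdot\|_1)\to(L_2,\|\cdot\|_2)$ is a group isomorphism $\psi:L_1\to L_2$ with $\|\psi(x)\|_2=\|x\|_1$ for all $x\in L_1$. *)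

theory Defs
  imports Main "HOL.Real"
begin

definition zmult :: "int \<Rightarrow> 'a::ab_group_add \<Rightarrow> 'a" where
  "zmult n x = (if 0 \<le> n then ((+) x ^^ nat n) 0 else - (((+) x ^^ nat (- n)) 0))"

definition torsion_free_rank1 :: "'a::ab_group_add itself \<Rightarrow> bool" where
  "torsion_free_rank1 _ \<longleftrightarrow>
     (\<forall>(n::int) (x::'a). n \<noteq> 0 \<longrightarrow> zmult n x = 0 \<longrightarrow> x = 0) \<and>
     (\<exists>x::'a. x \<noteq> 0) \<and>
     (\<forall>x y::'a. \<exists>m n::int. (m \<noteq> 0 \<or> n \<noteq> 0) \<and> zmult m x = zmult n y)"

text \<open>The semi-norm on L \<otimes> R is recorded by its restriction to L (all that the
  notions of isomorphism and S(D) use): it has the form x \<mapsto> lam * |f x| where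
  f : L \<rightarrow> R is the restriction of an R-linear isomorphism L \<otimes> R \<rightarrow> R, i.e. an
  injective group homomorphism L \<rightarrow> R.\<close>
definition arith_divisor :: "('a::ab_group_add \<Rightarrow> real) \<Rightarrow> bool" where
  "arith_divisor nrm \<longleftrightarrow> torsion_free_rank1 TYPE('a) \<and>
     (\<exists>(lam::real) (f::'a \<Rightarrow> real). 0 \<le> lam \<and>
        (\<forall>x y. f (x + y) = f x + f y) \<and> inj f \<and>
        (\<forall>x. nrm x = lam * \<bar>f x\<bar>))"

definition non_degenerate :: "('a \<Rightarrow> real) \<Rightarrow> bool" where
  "non_degenerate nrm \<longleftrightarrow> (\<exists>x. nrm x \<noteq> 0)"

definition arith_divisor_iso ::
  "('a::ab_group_add \<Rightarrow> real) \<Rightarrow> ('b::ab_group_add \<Rightarrow> real) \<Rightarrow> bool" where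
  "arith_divisor_iso nrm1 nrm2 \<longleftrightarrow>
     (\<exists>\<psi>::'a \<Rightarrow> 'b. bij \<psi> \<and> (\<forall>x y. \<psi> (x + y) = \<psi> x + \<psi> y) \<and>
        (\<forall>x. nrm2 (\<psi> x) = nrm1 x))"

definition value_set :: "('a \<Rightarrow> real) \<Rightarrow> real set" where
  "value_set nrm = range nrm"

end

theory Submission
  imports Defs "HOL.Modules"
begin

text \<open>A non-degenerate divisor has norm \<open>|g x|\<close> for the injective homomorphism
  \<open>g = lam * f\<close> into \<open>\<real>\<close>. The value set \<open>{|g x|}\<close> determines the subgroup \<open>g(L)\<close>, since
  that subgroup is symmetric; and two injective homomorphisms with the same image \<open>G\<close>
  differ by the isomorphism \<open>g\<^sub>2\<^sup>-\<^sup>1 \<circ> g\<^sub>1\<close> through \<open>G\<close>, which preserves the norms.\<close>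

lemma arith_divisor_iso_value_set:
  assumes "arith_divisor_iso nrm1 nrm2"
  shows "value_set nrm1 = value_set nrm2"
proof -
  obtain \<psi> where "surj \<psi>" and "\<forall>x. nrm2 (\<psi> x) = nrm1 x"
    using assms unfolding arith_divisor_iso_def bij_def by blast
  from this(2) have "range nrm1 = nrm2 ` range \<psi>"
    by (simp add: image_image)
  with \<open>surj \<psi>\<close> show ?thesis
    by (simp add: value_set_def)
qed

lemma non_degenerate_arith_divisor_abs_hom:
  fixes nrm :: "'a::ab_group_add \<Rightarrow> real"
  assumes "arith_divisor nrm" and "non_degenerate nrm"
  obtains g :: "'a \<Rightarrow> real" where "additive g" and "inj g" and "\<And>x. nrm x = \<bar>g x\<bar>"
proof -
  obtain lam f where "0 \<le> lam" and f_add: "\<forall>x y. f (x + y) = f x + (f y :: real)"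
    and "inj f" and nrm_eq: "\<forall>x. nrm x = lam * \<bar>f x\<bar>"
    using assms(1) unfolding arith_divisor_def by blast
  have "lam > 0"
    using \<open>0 \<le> lam\<close> assms(2) nrm_eq unfolding non_degenerate_def by force
  show thesis
  proof
    show "additive (\<lambda>x. lam * f x)"
      using f_add by (simp add: additive_def distrib_left)
    show "inj (\<lambda>x. lam * f x)"
      using \<open>inj f\<close> \<open>lam > 0\<close> by (simp add: inj_def)
    show "nrm x = \<bar>lam * f x\<bar>" for x
      using nrm_eq \<open>lam > 0\<close> by (simp add: abs_mult)
  qed
qed

lemma additive_range_eq_abs_range:
  fixes g :: "'a::ab_group_add \<Rightarrow> real"
  assumes "additive g"
  shows "range g = {t. \<bar>t\<bar> \<in> range (\<lambda>x. \<bar>g x\<bar>)}"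
proof (intro set_eqI iffI)
  fix t assume "t \<in> {t. \<bar>t\<bar> \<in> range (\<lambda>x. \<bar>g x\<bar>)}"
  then obtain x where "\<bar>t\<bar> = \<bar>g x\<bar>" by auto
  then have "t = g x \<or> t = g (- x)"
    using additive.minus[OF assms] by (auto simp: abs_eq_iff)
  then show "t \<in> range g" by auto
qed auto

lemma inj_additive_same_range_iso:
  fixes g1 :: "'a::ab_group_add \<Rightarrow> 'c::ab_group_add" and g2 :: "'b::ab_group_add \<Rightarrow> 'c"
  assumes "additive g1" "additive g2" "inj g1" "inj g2" and "range g1 = range g2"
  shows "bij (inv g2 \<circ> g1)" and "additive (inv g2 \<circ> g1)" and "\<And>x. g2 ((inv g2 \<circ> g1) x) = g1 x"
proof -
  show g2_inv: "g2 ((inv g2 \<circ> g1) x) = g1 x" for x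
    using assms(5) by (metis comp_apply f_inv_into_f rangeI)
  have "bij_betw g1 UNIV (range g2)" "bij_betw g2 UNIV (range g2)"
    using assms(3-5) inj_on_imp_bij_betw by metis+
  then show "bij (inv g2 \<circ> g1)"
    using bij_betw_trans bij_betw_inv_into by blast
  have "g2 ((inv g2 \<circ> g1) (x + y)) = g2 ((inv g2 \<circ> g1) x + (inv g2 \<circ> g1) y)" for x y
    by (simp only: g2_inv additive.add[OF assms(1)] additive.add[OF assms(2)])
  then show "additive (inv g2 \<circ> g1)"
    using \<open>inj g2\<close> by (simp add: additive_def inj_eq del: comp_apply)
qed

theorem theorem3p11:
  fixes nrm1 :: "'a::ab_group_add \<Rightarrow> real" and nrm2 :: "'b::ab_group_add \<Rightarrow> real"
  assumes "arith_divisor nrm1" and "arith_divisor nrm2"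
    and "non_degenerate nrm1" and "non_degenerate nrm2"
  shows "arith_divisor_iso nrm1 nrm2 \<longleftrightarrow> value_set nrm1 = value_set nrm2"
proof
  assume "value_set nrm1 = value_set nrm2"
  obtain g1 where g1: "additive g1" "inj g1" and nrm1: "\<And>x. nrm1 x = \<bar>g1 x\<bar>"
    using non_degenerate_arith_divisor_abs_hom assms(1,3) by blast
  obtain g2 where g2: "additive g2" "inj g2" and nrm2: "\<And>x. nrm2 x = \<bar>g2 x\<bar>"
    using non_degenerate_arith_divisor_abs_hom assms(2,4) by blast
  have "range g1 = range g2"
    using \<open>value_set nrm1 = value_set nrm2\<close> additive_range_eq_abs_range[OF g1(1)]
      additive_range_eq_abs_range[OF g2(1)]
    by (simp add: value_set_def nrm1[abs_def] nrm2[abs_def])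
  note iso = inj_additive_same_range_iso[OF g1(1) g2(1) g1(2) g2(2) this]
  show "arith_divisor_iso nrm1 nrm2"
    unfolding arith_divisor_iso_def
    using iso(1) iso(2)[unfolded additive_def] iso(3) by (auto simp: nrm1 nrm2)
qed (rule arith_divisor_iso_value_set)

end
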